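(* Let $(\alpha_1,\alpha_2)$ be a good pair with canonical representation $(x,y,z)$ and set $\alpha_3:=1-x^2$. Suppose $a_{12},a_{13},a_{23},d$ are nonnegative reals satisfying all of \begin{align*} a_{12}(a_{12}+d)&>\alpha_1+\alpha_2-1,\\ a_{13}(a_{13}+d)&>\alpha_1+\alpha_3-1,\\ a_{23}(a_{23}+d)&>\alpha_2+\alpha_3-1,\\ \textstyle\sum_{ij\in\{12,13,23\}}a_{ij}(a_{ij}+d)&>\alpha_1+\alpha_2+\alpha_3-1,\\ a_{12}^2+2a_{13}^2+2a_{23}^2+2a_{13}d+2a_{23}d&>2\alpha_1+2\alpha_2+3\alpha_3-3,\\ 2a_{12}^2+a_{13}^2+2a_{23}^2+2a_{12}d+2a_{23}d&>2\alpha_1+3\alpha_2+2\alpha_3-3,\\ 2a_{12}^2+2a_{13}^2+a_{23}^2+2a_{12}d+2a_{13}d&>3\alpha_1+2\alpha_2+2\alpha_3-3. \end{align*} Then $a_{12}+a_{13}+a_{23}+d>1$.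
   Context: $\tau=\frac{4-\sqrt7}{9}$. A pair $(\alpha_1,\alpha_2)\in[0,1]^2$ is a good pair if $\max\{\frac14,\frac{\alpha_1+\sqrt{2\alpha_1-1}}{2}\}\le\alpha_2$ and $\max\{\alpha_2,1-\alpha_2,\frac{1+\tau^2}{2}\}\le\alpha_1$, and in addition the unique $(x,y,z)\in[0,1]^3$ with $x+y+z=1$, $x\ge\frac12$, $\alpha_1=x^2+y^2$, $\alpha_2=x^2+z^2$ satisfies $2x^2+z^2\ge1$; this $(x,y,z)$ is the canonical representation. *)

theory Defs
  imports Complex_Main
begin

definition tau :: real where
  "tau = (4 - sqrt 7) / 9"

definition canonical_rep :: "real \<Rightarrow> real \<Rightarrow> real \<Rightarrow> real \<Rightarrow> real \<Rightarrow> bool" where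
  "canonical_rep a1 a2 x y z \<longleftrightarrow>
     0 \<le> x \<and> x \<le> 1 \<and> 0 \<le> y \<and> y \<le> 1 \<and> 0 \<le> z \<and> z \<le> 1 \<and>
     x + y + z = 1 \<and> x \<ge> 1/2 \<and> a1 = x^2 + y^2 \<and> a2 = x^2 + z^2"

definition good_pair :: "real \<Rightarrow> real \<Rightarrow> bool" where
  "good_pair a1 a2 \<longleftrightarrow>
     0 \<le> a1 \<and> a1 \<le> 1 \<and> 0 \<le> a2 \<and> a2 \<le> 1 \<and>
     max (1/4) ((a1 + sqrt (2*a1 - 1)) / 2) \<le> a2 \<and>
     max (max a2 (1 - a2)) ((1 + tau^2) / 2) \<le> a1 \<and>
     (\<exists>!(x,y,z). canonical_rep a1 a2 x y z) \<and>
     (\<forall>x y z. canonical_rep a1 a2 x y z \<longrightarrow> 2*x^2 + z^2 \<ge> 1)"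

end

theory Submission
  imports Defs
begin

text \<open>
  Raising \<open>d\<close> only strengthens the hypotheses, so it suffices to refute
  \<open>a\<^sub>1\<^sub>2 + a\<^sub>1\<^sub>3 + a\<^sub>2\<^sub>3 + d = 1\<close>. In the canonical coordinates and with
  \<open>t = sqrt (\<alpha>\<^sub>1 + \<alpha>\<^sub>2 - 1)\<close> the hypotheses become seven strict polynomial
  inequalities. AM--GM bounds on \<open>y z\<close>, \<open>t z\<close>, \<open>t y\<close> strengthen (5)--(7) and confine
  every \<open>a\<^sub>i\<^sub>j\<close> to \<open>[0, min x (4/3 - x))\<close>. After splitting on which \<open>a\<^sub>i\<^sub>j\<close>
  reaches \<open>1/2\<close>, each case is refuted by a Positivstellensatz certificate: a combination
  of the (positive) constraint slacks with nonnegative polynomial weights that is strictly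
  positive, yet identically a multiple of \<open>\<alpha>\<^sub>1 + \<alpha>\<^sub>2 - 1 - t\<^sup>2\<close>, hence zero.
\<close>

lemma less_mean_of_sq_less:
  fixes u a d :: real
  assumes "u^2 < a * (a + d)" "0 \<le> a" "0 \<le> d"
  shows "u < a + d / 2"
proof (rule power2_less_imp_less)
  have "(a + d / 2)^2 = a * (a + d) + (d / 2)^2"
    by (simp add: power2_eq_square algebra_simps)
  then show "u^2 < (a + d / 2)^2"
    using assms(1) zero_le_power2[of "d / 2"] by linarith
qed (use assms in simp)

lemma mult_less_mean_of_sq_less:
  fixes u v a b d :: real
  assumes u: "u^2 < a * (a + d)" and v: "v^2 < b * (b + d)"
    and "0 \<le> a" "0 \<le> b" "0 \<le> d"
  shows "u * v < a * b + d * (a + b) / 2"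
proof (rule power2_less_imp_less)
  have "(u * v)^2 = u^2 * v^2"
    by (simp add: power_mult_distrib)
  also have "\<dots> < (a * (a + d)) * (b * (b + d))"
    using u v by (intro mult_strict_mono') simp_all
  also have "\<dots> \<le> (a * b + d * (a + b) / 2)^2"
  proof -
    have "(a * b + d * (a + b) / 2)^2 = (a * (a + d)) * (b * (b + d)) + (d * (a - b) / 2)^2"
      by (simp add: power2_eq_square field_simps)
    then show ?thesis
      using zero_le_power2[of "d * (a - b) / 2"] by linarith
  qed
  finally show "(u * v)^2 < (a * b + d * (a + b) / 2)^2" .
qed (use assms in simp)

text \<open>
  \<open>p, q, r\<close> stand for \<open>a\<^sub>1\<^sub>2, a\<^sub>1\<^sub>3, a\<^sub>2\<^sub>3\<close> and \<open>c1\<close>--\<open>c7\<close> are the seven hypotheses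
  with \<open>\<alpha>\<^sub>1 = x\<^sup>2 + y\<^sup>2\<close>, \<open>\<alpha>\<^sub>2 = x\<^sup>2 + z\<^sup>2\<close>, \<open>\<alpha>\<^sub>3 = 1 - x\<^sup>2\<close> substituted.
\<close>

locale reduced_config =
  fixes x y z t p q r d :: real
  assumes sum_xyz: "x + y + z = 1" and sum_pqrd: "p + q + r + d = 1"
    and t_sq: "t^2 = 2*x^2 + y^2 + z^2 - 1"
    and z_nonneg: "0 \<le> z" and z_le_y: "z \<le> y" and y_le_t: "y \<le> t" and t_le_x: "t \<le> x"
    and p_nonneg: "0 \<le> p" and q_nonneg: "0 \<le> q" and r_nonneg: "0 \<le> r" and d_nonneg: "0 \<le> d"
    and c1: "t^2 < p*(p+d)" and c2: "y^2 < q*(q+d)" and c3: "z^2 < r*(r+d)"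
    and c4: "x^2 + y^2 + z^2 < p*(p+d) + q*(q+d) + r*(r+d)"
    and c5: "x^2 + 2*y^2 + 2*z^2 < p^2 + 2*q^2 + 2*r^2 + 2*q*d + 2*r*d"
    and c6: "3*x^2 + 2*y^2 + 3*z^2 - 1 < 2*p^2 + q^2 + 2*r^2 + 2*p*d + 2*r*d"
    and c7: "3*x^2 + 3*y^2 + 2*z^2 - 1 < 2*p^2 + 2*q^2 + r^2 + 2*p*d + 2*q*d"
begin

lemma x_eq: "x = 1 - y - z"
  using sum_xyz by linarith

lemma d_eq: "d = 1 - p - q - r"
  using sum_pqrd by linarith

lemma y_nonneg: "0 \<le> y"
  using z_nonneg z_le_y by linarith

lemma t_nonneg: "0 \<le> t"
  using y_nonneg y_le_t by linarith

text \<open>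
  Modulo \<open>x + y + z = 1\<close> and \<open>p + q + r + d = 1\<close> (see \<open>g_eq\<close>), \<open>g1, \<dots>, g4\<close> are the
  slacks of the constraints (1)--(4), \<open>g4\<close> halved, and \<open>g5, g6, g7\<close> are those of (5)--(7)
  plus four times the AM--GM slacks of \<open>y z\<close>, \<open>t z\<close>, \<open>t y\<close>. The unnormalised forms keep
  the certificates below small enough for \<open>algebra\<close>.
\<close>

definition "g1 = p*(p+d) - t^2"
definition "g2 = q*(q+d) - y^2"
definition "g3 = r*(r+d) - z^2"
definition "g4 = x*y + x*z + y*z - (p*q + q*r + r*p + d/2)"
definition "g5 = (1-x)*(3*x-1) - (1-p)*(3*p-1) - 2*d^2"
definition "g6 = (1-y)*(3*y-1) + 4*z*(x-t) + 2*(x*y + x*z + y*z) - (1-q)*(3*q-1) - 2*d^2"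
definition "g7 = (1-z)*(3*z-1) + 4*y*(x-t) + 2*(x*y + x*z + y*z) - (1-r)*(3*r-1) - 2*d^2"

lemmas g_defs = g1_def g2_def g3_def g4_def g5_def g6_def g7_def

lemma g_eq:
  "g4 = (p*(p+d) + q*(q+d) + r*(r+d) - (x^2 + y^2 + z^2)) / 2"
  "g5 = (p^2 + 2*q^2 + 2*r^2 + 2*q*d + 2*r*d - (x^2 + 2*y^2 + 2*z^2))
    + 4 * (q*r + d*(q+r)/2 - y*z)"
  "g6 = (2*p^2 + q^2 + 2*r^2 + 2*p*d + 2*r*d - (3*x^2 + 2*y^2 + 3*z^2 - 1))
    + 4 * (p*r + d*(p+r)/2 - t*z)"
  "g7 = (2*p^2 + 2*q^2 + r^2 + 2*p*d + 2*q*d - (3*x^2 + 3*y^2 + 2*z^2 - 1))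
    + 4 * (p*q + d*(p+q)/2 - t*y)"
  unfolding g_defs unfolding x_eq d_eq by (simp_all add: power2_eq_square field_simps)

lemma g_pos: "0 < g1" "0 < g2" "0 < g3" "0 < g4" "0 < g5" "0 < g6" "0 < g7"
proof -
  note nonneg = p_nonneg q_nonneg r_nonneg d_nonneg
  have "y * z < q*r + d*(q+r)/2"
    using mult_less_mean_of_sq_less[OF c2 c3] nonneg by simp
  with c5 show "0 < g5"
    unfolding g_eq by (intro add_pos_pos mult_pos_pos) simp_all
  have "t * z < p*r + d*(p+r)/2"
    using mult_less_mean_of_sq_less[OF c1 c3] nonneg by simp
  with c6 show "0 < g6"
    unfolding g_eq by (intro add_pos_pos mult_pos_pos) simp_all
  have "t * y < p*q + d*(p+q)/2"
    using mult_less_mean_of_sq_less[OF c1 c2] nonneg by simp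
  with c7 show "0 < g7"
    unfolding g_eq by (intro add_pos_pos mult_pos_pos) simp_all
  show "0 < g4"
    unfolding g_eq using c4 by simp
qed (use c1 c2 c3 in \<open>simp_all add: g_defs\<close>)

lemma less_x: "p < x" "q < x" "r < x"
proof -
  note nonneg = p_nonneg q_nonneg r_nonneg d_nonneg
  have "t < p + d/2" "y < q + d/2" "z < r + d/2"
    using less_mean_of_sq_less c1 c2 c3 nonneg by blast+
  then show "p < x" "q < x" "r < x"
    using sum_xyz sum_pqrd y_le_t z_le_y by linarith+
qed

lemma less_four_thirds_minus_x: "p < 4/3 - x" "q < 4/3 - x" "r < 4/3 - x"
proof -
  have "g5 = 3 * ((x - p) * (4/3 - x - p)) - 2 * d^2"
    unfolding g5_def by (simp add: power2_eq_square field_simps)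
  then have "0 < (x - p) * (4/3 - x - p)"
    using g_pos(5) zero_le_power2[of d] by linarith
  then show "p < 4/3 - x"
    using less_x(1) zero_less_mult_pos by force
  have "g6 = 3 * ((x - q) * (4/3 - x - q)) - 2 * d^2 - (t - y) * (t + y + 4*z)"
    using t_sq unfolding g6_def unfolding x_eq by (simp add: power2_eq_square field_simps)
  moreover have "0 \<le> (t - y) * (t + y + 4*z)"
    using y_le_t t_nonneg y_nonneg z_nonneg by simp
  ultimately have "0 < (x - q) * (4/3 - x - q)"
    using g_pos(6) zero_le_power2[of d] by linarith
  then show "q < 4/3 - x"
    using less_x(2) zero_less_mult_pos by force
  have "g7 = 3 * ((x - r) * (4/3 - x - r)) - 2 * d^2
      - ((t^2 - y^2) + 4 * y * (t - y) + (5*y + z) * (y - z))"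
    using t_sq unfolding g7_def unfolding x_eq by (simp add: power2_eq_square field_simps)
  moreover have "0 \<le> (t^2 - y^2) + 4 * y * (t - y) + (5*y + z) * (y - z)"
  proof -
    have "y^2 \<le> t^2"
      using y_le_t y_nonneg by (rule power_mono)
    moreover have "0 \<le> y * (t - y)" "0 \<le> (5*y + z) * (y - z)"
      using y_le_t y_nonneg z_nonneg z_le_y by simp_all
    ultimately show ?thesis by linarith
  qed
  ultimately have "0 < (x - r) * (4/3 - x - r)"
    using g_pos(7) zero_le_power2[of d] by linarith
  then show "r < 4/3 - x"
    using less_x(3) zero_less_mult_pos by force
qed

lemma certificate_atoms_nonneg:
  "0 \<le> y - z" "0 \<le> t - y" "0 \<le> x - t" "0 \<le> x - p" "0 \<le> 4/3 - x - p"
  using z_le_y y_le_t t_le_x less_x(1) less_four_thirds_minus_x(1) by linarith+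

lemma refute_p_ge_half:
  assumes "1/2 \<le> p"
  shows False
proof -
  have atoms: "0 \<le> p - 1/2"
    using assms by simp
  have pos: "0 < g4 + ((6949/3000)*(g5*(t - y)) + (2711/120)*(g5*(p - 1/2)) + (99/500)*(g5*(y - z)*(t - y))
      + (753/500)*(g5*(y - z)*q) + (2297/600)*(g5*z*r) + (5117/1500)*(g5*z*d)
      + (7943/3000)*(g5*z*(x - p)) + (853/750)*(g5*z*(x - t)) + (17839/3000)*(g5*(t - y)*p)
      + (5111/3000)*(g5*(t - y)*r) + (11647/3000)*(g5*p*r) + (14009/3000)*(g5*p*d)
      + (701/120)*(g5*p*(x - t)) + (3/5)*(g5*q*(4/3 - x - p)) + (104/125)*(g5*r*r)
      + (2531/1500)*(g5*r*(x - t)) + (139/1000)*(g5*d*d) + (1979/1500)*(g5*d*(x - t))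
      + (629/600)*(g5*d*(p - 1/2)) + (1909/3000)*(g5*(x - p)*(4/3 - x - p))
      + (56/125)*(g5*(x - t)*(x - t)) + (1361/3000)*(g6*(t - y)*(t - y))
      + (11/12)*(g6*(t - y)*(4/3 - x - p)) + (829/500)*(g6*(4/3 - x - p)*(p - 1/2))
      + (509/500)*(g7*(y - z)*r) + (321/1000)*(g7*z*(t - y)) + (3071/3000)*(g7*(t - y)*r)
      + (2159/3000)*(g7*(t - y)*d) + (6139/3000)*(g7*r*(4/3 - x - p)) + (13499/1500)*(g4*r)
      + (8251/150)*(g4*d) + (31129/1500)*(g4*(x - p)) + (116011/3000)*(g4*(4/3 - x - p))
      + (5033/1500)*(g4*(x - t)) + (11759/1000)*(g4*(y - z)*z) + (27107/3000)*(g4*(y - z)*r)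
      + (11197/3000)*(g4*(y - z)*(x - t)) + (34447/1500)*(g4*z*q)
      + (2549/750)*(g4*(t - y)*(x - t)) + (7433/3000)*(g4*q*(x - t)) + (11143/1500)*(g4*d*d)
      + (1887/250)*(g4*d*(x - p)) + (119/20)*(g4*(x - p)*(x - p))
      + (11897/3000)*(g4*(x - p)*(x - t)) + (5699/1000)*(g4*(4/3 - x - p)*(x - t))
      + (8213/3000)*(g1*(t - y)*d) + (30761/1500)*(g2*r) + (5723/500)*(g2*z*z)
      + (1426/75)*(g2*r*r) + (3817/150)*(g2*r*d) + (4937/500)*(g2*r*(x - p))
      + (1347/250)*(g2*r*(x - t)) + (15821/3000)*(g2*d*(4/3 - x - p)) + (12933/1000)*(g3*(y - z))
      + (68789/3000)*(g3*q) + (67367/3000)*(g3*(y - z)*(y - z)) + (363/100)*(g3*(y - z)*p)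
      + (88979/3000)*(g3*(y - z)*q) + (20189/1000)*(g3*(y - z)*d) + (433/300)*(g3*(t - y)*(x - t))
      + (51201/1000)*(g3*q*d) + (106/125)*(g3*q*(x - p)) + (48467/3000)*(g3*d*d)
      + (2879/375)*(g3*(4/3 - x - p)*(4/3 - x - p)) + (191/1000)*((t - y)*(t - y))
      + (6247/1500)*((t - y)*d) + (5183/750)*(d*(4/3 - x - p))
      + (2929/1500)*((y - z)*(y - z)*(t - y)) + (11213/1500)*((y - z)*(y - z)*d)
      + (2987/375)*((y - z)*(y - z)*(4/3 - x - p)) + (7789/3000)*((y - z)*(t - y)*q)
      + (36533/3000)*((y - z)*(t - y)*d) + (5549/3000)*((y - z)*(t - y)*(x - p))
      + (1057/1500)*((y - z)*d*d) + (6443/750)*(z*d*(4/3 - x - p))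
      + (3863/250)*((t - y)*(t - y)*d) + (1351/375)*((t - y)*(t - y)*(x - p))
      + (1699/1000)*((t - y)*(t - y)*(4/3 - x - p)) + (3029/3000)*((t - y)*(t - y)*(x - t))
      + (842/375)*((t - y)*r*(x - p)) + (401/200)*((t - y)*d*(4/3 - x - p))
      + (6409/3000)*((t - y)*(4/3 - x - p)*(4/3 - x - p)) + (9253/600)*(q*r*(4/3 - x - p))
      + (7399/600)*(q*d*(4/3 - x - p)) + (6079/600)*(d*d*d) + (3614/375)*(d*d*(x - p))
      + (71/150)*(d*(4/3 - x - p)*(4/3 - x - p)) + (9109/1500)*((y - z)*(y - z)*(y - z)*(y - z))
      + (3551/3000)*((y - z)*(y - z)*(y - z)*r) + (83/30)*((y - z)*(y - z)*(y - z)*d)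
      + (14693/1500)*((y - z)*(y - z)*(y - z)*(x - p))
      + (16189/1500)*((y - z)*(y - z)*z*(4/3 - x - p))
      + (557/3000)*((y - z)*(y - z)*(t - y)*(t - y)) + (683/600)*((y - z)*(y - z)*(t - y)*q)
      + (3397/750)*((y - z)*(y - z)*(t - y)*(4/3 - x - p)) + (4222/375)*((y - z)*(y - z)*q*r)
      + (151/25)*((y - z)*(y - z)*q*d) + (388/125)*((y - z)*(y - z)*d*(x - p))
      + (5113/3000)*((y - z)*(y - z)*d*(4/3 - x - p))
      + (4671/1000)*((y - z)*(y - z)*(x - p)*(x - p))
      + (5111/1000)*((y - z)*(y - z)*(4/3 - x - p)*(x - t)) + (3883/200)*((y - z)*z*z*z)
      + (859/250)*((y - z)*z*(t - y)*(x - p)) + (991/300)*((y - z)*z*(t - y)*(x - t))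
      + (11047/1000)*((y - z)*z*r*d) + (27611/1500)*((y - z)*z*r*(x - p))
      + (101/120)*((y - z)*(t - y)*(t - y)*q) + (13687/3000)*((y - z)*(t - y)*p*d)
      + (2639/3000)*((y - z)*(t - y)*q*q) + (25691/3000)*((y - z)*(t - y)*q*(4/3 - x - p))
      + (5393/1500)*((y - z)*(t - y)*r*(x - t)) + (2359/3000)*((y - z)*(t - y)*d*d)
      + (5491/1000)*((y - z)*(t - y)*d*(x - t)) + (148/375)*((y - z)*(t - y)*(x - p)*(4/3 - x - p))
      + (613/750)*((y - z)*(t - y)*(x - p)*(x - t))
      + (269/100)*((y - z)*(t - y)*(4/3 - x - p)*(4/3 - x - p))
      + (40367/3000)*((y - z)*q*q*(4/3 - x - p)) + (10279/750)*((y - z)*q*r*d)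
      + (14971/1000)*((y - z)*q*r*(p - 1/2)) + (8073/500)*((y - z)*q*d*d)
      + (11423/3000)*((y - z)*q*(x - p)*(4/3 - x - p))
      + (1167/500)*((y - z)*q*(4/3 - x - p)*(x - t)) + (196/375)*((y - z)*r*r*(x - p))
      + (2627/1500)*((y - z)*r*(4/3 - x - p)*(4/3 - x - p)) + (1393/750)*((y - z)*d*d*d)
      + (4151/3000)*((y - z)*d*(x - p)*(x - p)) + (5/8)*((y - z)*(x - p)*(x - p)*(x - p))
      + (4639/1500)*((y - z)*(4/3 - x - p)*(4/3 - x - p)*(p - 1/2))
      + (1417/200)*(z*z*(x - p)*(x - p)) + (1991/600)*(z*(t - y)*(t - y)*(x - p))
      + (10763/600)*(z*q*d*(4/3 - x - p)) + (2053/1000)*(z*r*d*(x - p))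
      + (2707/750)*(z*r*(4/3 - x - p)*(x - t)) + (431/1000)*((t - y)*(t - y)*(t - y)*(t - y))
      + (113/750)*((t - y)*(t - y)*(t - y)*r) + (883/375)*((t - y)*(t - y)*p*(x - p))
      + (6823/3000)*((t - y)*(t - y)*q*r) + (6537/1000)*((t - y)*(t - y)*q*(4/3 - x - p))
      + (2623/1500)*((t - y)*(t - y)*(x - p)*(x - t))
      + (257/750)*((t - y)*(t - y)*(4/3 - x - p)*(4/3 - x - p))
      + (16033/3000)*((t - y)*p*p*(x - p)) + (373/600)*((t - y)*p*r*r)
      + (2029/1000)*((t - y)*p*d*(4/3 - x - p)) + (1189/1000)*((t - y)*q*q*q)
      + (238/75)*((t - y)*q*(4/3 - x - p)*(4/3 - x - p)) + (31/60)*((t - y)*q*(x - t)*(x - t))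
      + (7553/3000)*((t - y)*q*(x - t)*(p - 1/2)) + (3389/1500)*((t - y)*r*d*d)
      + (1361/1500)*((t - y)*r*d*(x - p)) + (6113/3000)*((t - y)*r*(x - p)*(4/3 - x - p))
      + (1507/3000)*((t - y)*d*d*(4/3 - x - p)) + (533/600)*((t - y)*d*(x - p)*(x - p))
      + (28187/1500)*(p*q*r*(4/3 - x - p)) + (2596/375)*(p*r*d*(4/3 - x - p))
      + (10211/375)*(q*q*r*d) + (75749/3000)*(q*q*r*(4/3 - x - p))
      + (1033/125)*(q*r*(x - p)*(p - 1/2)) + (14459/3000)*(q*d*d*(x - p))
      + (68629/3000)*(r*r*r*(p - 1/2)) + (8393/3000)*(r*r*d*(4/3 - x - p))
      + (4147/600)*(r*r*(x - p)*(x - p)) + (588/125)*(r*r*(p - 1/2)*(p - 1/2))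
      + (879/500)*(r*(4/3 - x - p)*(4/3 - x - p)*(4/3 - x - p))
      + (3223/750)*(r*(4/3 - x - p)*(x - t)*(x - t)) + (67/375)*(d*d*d*d)
      + (163/1000)*(d*d*(x - p)*(4/3 - x - p)) + (887/250)*(d*d*(4/3 - x - p)*(4/3 - x - p))
      + (637/300)*(d*(x - p)*(x - p)*(x - p))
      + (233/600)*(d*(4/3 - x - p)*(4/3 - x - p)*(4/3 - x - p))
      + (793/375)*(d*(4/3 - x - p)*(x - t)*(x - t))
      + (13/60)*((x - p)*(x - p)*(4/3 - x - p)*(4/3 - x - p))
      + (3001/600)*((4/3 - x - p)*(4/3 - x - p)*(4/3 - x - p)*(p - 1/2))) + ((34/3375)
      + (769/81000)*r + (47/4500)*(r^2) + (167/18000)*(r^3) + (529/300)*(r^4) + (1553/162000)*q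
      + (23/2160)*(q*r) + (79/9000)*(q*r^2) + (62629/3000)*(q*r^3) + (37/3600)*(q^2)
      + (11/1125)*(q^2*r) + (31/3000)*(q^2*r^2) + (1/100)*(q^3) + (1/100)*(q^3*r) + (149/1500)*(q^4)
      + (409/40500)*p + (97/10800)*(p*r) + (31/3000)*(p*r^2) + (4/375)*(p*r^3) + (77/9000)*(p*q)
      + (103/9000)*(p*q*r) + (4/375)*(p*q*r^2) + (49/4500)*(p*q^2) + (29/3000)*(p*q^2*r)
      + (29/3000)*(p*q^3) + (277/27000)*(p^2) + (221/18000)*(p^2*r) + (7/750)*(p^2*r^2)
      + (1/80)*(p^2*q) + (13/1500)*(p^2*q*r) + (9/1000)*(p^2*q^2) + (83/9000)*(p^3) + (9/1000)*(p^3*r)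
      + (9/1000)*(p^3*q) + (31/3000)*(p^4) + (34/3375)*t + (101/9000)*(t*r) + (7/750)*(t*r^2)
      + (27/250)*(t*r^3) + (8/675)*(t*q) + (49/6000)*(t*q*r) + (31/3000)*(t*q*r^2) + (17/2000)*(t*q^2)
      + (941/1000)*(t*q^2*r) + (31/3000)*(t*q^3) + (79/9000)*(t*p) + (83/9000)*(t*p*r)
      + (1/100)*(t*p*r^2) + (151/18000)*(t*p*q) + (31/3000)*(t*p*q*r) + (11/1000)*(t*p*q^2)
      + (3/250)*(t*p^2) + (29/3000)*(t*p^2*r) + (29/3000)*(t*p^2*q) + (7/750)*(t*p^3)
      + (253/27000)*(t^2) + (91/9000)*(t^2*r) + (31/3000)*(t^2*r^2) + (7/720)*(t^2*q)
      + (247/750)*(t^2*q*r) + (11/150)*(t^2*q^2) + (4/375)*(t^2*p) + (1/100)*(t^2*p*r)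
      + (7/500)*(t^2*p*q) + (29/3000)*(t^2*p^2) + (1/100)*(t^3) + (917/3000)*(t^3*r)
      + (59/1500)*(t^3*q) + (1/100)*(t^3*p) + (1/100)*(t^4) + (173/18000)*z + (623/54000)*(z*r)
      + (179/18000)*(z*r^2) + (1/100)*(z*r^3) + (23/2000)*(z*q) + (7/720)*(z*q*r)
      + (193/200)*(z*q*r^2) + (179/18000)*(z*q^2) + (29/3000)*(z*q^2*r) + (39337/3000)*(z*q^3)
      + (53/5400)*(z*p) + (181/18000)*(z*p*r) + (7/750)*(z*p*r^2) + (37/3600)*(z*p*q)
      + (7/750)*(z*p*q*r) + (1/100)*(z*p*q^2) + (37/3600)*(z*p^2) + (29/3000)*(z*p^2*r)
      + (1/100)*(z*p^2*q) + (1/100)*(z*p^3) + (179/18000)*(z*t) + (163/18000)*(z*t*r)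
      + (31/3000)*(z*t*r^2) + (79/9000)*(z*t*q) + (11/1000)*(z*t*q*r) + (31/3000)*(z*t*q^2)
      + (193/18000)*(z*t*p) + (31/3000)*(z*t*p*r) + (31/3000)*(z*t*p*q) + (29/3000)*(z*t*p^2)
      + (97/9000)*(z*t^2) + (1/100)*(z*t^2*r) + (31/3000)*(z*t^2*q) + (7/750)*(z*t^2*p)
      + (43/1500)*(z*t^3) + (577/54000)*(z^2) + (31/3600)*(z^2*r) + (31/3000)*(z^2*r^2)
      + (161/18000)*(z^2*q) + (1/100)*(z^2*q*r) + (29/3000)*(z^2*q^2) + (91/9000)*(z^2*p)
      + (31/3000)*(z^2*p*r) + (7/750)*(z^2*p*q) + (29/3000)*(z^2*p^2) + (13/1500)*(z^2*t)
      + (4/375)*(z^2*t*r) + (11/1000)*(z^2*t*q) + (29/3000)*(z^2*t*p) + (1/100)*(z^2*t^2)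
      + (169/18000)*(z^3) + (31/3000)*(z^3*r) + (31/3000)*(z^3*q) + (11/1000)*(z^3*p)
      + (11/1000)*(z^3*t) + (29/3000)*(z^4) + (53/6000)*y + (149/10800)*(y*r) + (143/18000)*(y*r^2)
      + (4/375)*(y*r^3) + (337/27000)*(y*q) + (101/18000)*(y*q*r) + (3/250)*(y*q*r^2)
      + (169/18000)*(y*q^2) + (11/1000)*(y*q^2*r) + (1/100)*(y*q^3) + (7/600)*(y*p)
      + (19/3600)*(y*p*r) + (37/3000)*(y*p*r^2) + (29/3600)*(y*p*q) + (1/75)*(y*p*q*r)
      + (31/3000)*(y*p*q^2) + (17/2000)*(y*p^2) + (3/250)*(y*p^2*r) + (17/1500)*(y*p^2*q)
      + (4/375)*(y*p^3) + (121/10800)*(y*t) + (29/3600)*(y*t*r) + (4/375)*(y*t*r^2)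
      + (53/6000)*(y*t*q) + (7/600)*(y*t*q*r) + (31/3000)*(y*t*q^2) + (167/18000)*(y*t*p)
      + (11/1000)*(y*t*p*r) + (17/1500)*(y*t*p*q) + (31/3000)*(y*t*p^2) + (19/1800)*(y*t^2)
      + (313/1500)*(y*t^2*r) + (1/100)*(y*t^2*q) + (29/3000)*(y*t^2*p) + (593/3000)*(y*t^3)
      + (691/54000)*(y*z) + (109/18000)*(y*z*r) + (11/1000)*(y*z*r^2) + (7/1125)*(y*z*q)
      + (4/375)*(y*z*q*r) + (4/375)*(y*z*q^2) + (163/18000)*(y*z*p) + (11/1000)*(y*z*p*r)
      + (4/375)*(y*z*p*q) + (13/1500)*(y*z*p^2) + (53/9000)*(y*z*t) + (31/3000)*(y*z*t*r)
      + (4/375)*(y*z*t*q) + (11/1000)*(y*z*t*p) + (11/1000)*(y*z*t^2) + (49/6000)*(y*z^2)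
      + (3/250)*(y*z^2*r) + (7/600)*(y*z^2*q) + (13/1000)*(y*z^2*p) + (19/1500)*(y*z^2*t)
      + (1/125)*(y*z^3) + (317/27000)*(y^2) + (31/4500)*(y^2*r) + (4/375)*(y^2*r^2)
      + (131/18000)*(y^2*q) + (17/1500)*(y^2*q*r) + (4/375)*(y^2*q^2) + (173/18000)*(y^2*p)
      + (17/1500)*(y^2*p*r) + (31/3000)*(y^2*p*q) + (13/1500)*(y^2*p^2) + (79/9000)*(y^2*t)
      + (11/1000)*(y^2*t*r) + (31/3000)*(y^2*t*q) + (29/3000)*(y^2*t*p) + (9/1000)*(y^2*t^2)
      + (137/18000)*(y^2*z) + (41/3000)*(y^2*z*r) + (37/3000)*(y^2*z*q) + (7/500)*(y^2*z*p)
      + (7/600)*(y^2*z*t) + (13/1500)*(y^2*z^2) + (139/18000)*(y^3) + (17/1500)*(y^3*r)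
      + (4/375)*(y^3*q) + (19/1500)*(y^3*p) + (7/600)*(y^3*t) + (1/100)*(y^3*z) + (1/100)*(y^4))"
    (is "0 < ?P")
    by (intro add_pos_nonneg add_nonneg_nonneg mult_nonneg_nonneg mult_pos_pos zero_le_power)
      (use atoms g_pos certificate_atoms_nonneg
        y_nonneg t_nonneg z_nonneg p_nonneg q_nonneg r_nonneg d_nonneg in simp_all)
  have ident: "?P = (- (72323/3000) + (42751/3000)*r + (273/20)*q + (69209/3000)*p + (2743/500)*t - (2803/1000)*z
      + (19603/3000)*y + (1793/1000)*r^2 - (3839/1000)*q*r + (369/1000)*q^2 + (703/750)*p*r
      + (3567/500)*p*q + (347/1000)*p^2 - (1597/500)*t*r - (9881/3000)*t*q - (13489/3000)*t*p
      - (441/1000)*t^2 - (297/1000)*z*r + (13/15)*z*q + (2807/300)*z*p + (14/375)*z*t + (113/1000)*z^2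
      + (89/750)*y*r - (8567/750)*y*q + (1333/3000)*y*p - (667/3000)*y*t + (5899/750)*y*z
      - (1238/375)*y^2)
      * (2*x^2 + y^2 + z^2 - 1 - t^2)"
    unfolding g_defs unfolding x_eq d_eq by algebra
  from pos show False
    unfolding ident by (simp add: t_sq)
qed

lemma refute_q_ge_half:
  assumes "1/2 \<le> q"
  shows False
proof -
  have atoms: "0 \<le> q - 1/2"
    using assms by simp
  have widths: "0 \<le> 4/3 - x - q" "0 \<le> 4/3 - x - r"
    using less_four_thirds_minus_x(2,3) by simp_all
  have pos: "0 < g4 + ((527/1500)*(g5*(t - y)) + (1867/1000)*(g5*(y - z)*(t - y))
      + (12437/3000)*(g5*(t - y)*(t - y)) + (5989/1500)*(g5*(t - y)*(4/3 - x - p))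
      + (4141/3000)*(g5*(t - y)*(4/3 - x - q)) + (1649/1500)*(g6*(t - y))
      + (23257/1500)*(g6*(q - 1/2)) + (1087/750)*(g6*(y - z)*(t - y)) + (338/375)*(g6*(y - z)*(x - p))
      + (7913/3000)*(g6*z*z) + (767/600)*(g6*z*(x - t)) + (619/1000)*(g6*(t - y)*(t - y))
      + (2021/3000)*(g6*(t - y)*r) + (1443/1000)*(g6*(t - y)*(x - p))
      + (12349/1500)*(g6*q*(x - p)) + (2507/1000)*(g6*q*(x - t)) + (271/375)*(g6*r*d)
      + (3547/3000)*(g6*r*(x - p)) + (1807/3000)*(g6*r*(x - t))
      + (977/3000)*(g6*d*(4/3 - x - p)) + (101/120)*(g6*d*(4/3 - x - q))
      + (507/500)*(g6*(4/3 - x - p)*(x - t)) + (31/40)*(g6*(x - t)*(q - 1/2))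
      + (469/200)*(g6*(q - 1/2)*(4/3 - x - q)) + (2399/750)*(g7*z*(t - y))
      + (6193/3000)*(g7*(t - y)*(x - p)) + (111/250)*(g7*(t - y)*(4/3 - x - p))
      + (796/375)*(g7*(t - y)*(q - 1/2)) + (713/1000)*(g7*r*(4/3 - x - q))
      + (8093/3000)*(g7*d*(4/3 - x - q)) + (106637/3000)*(g4*d) + (969/200)*(g4*(x - t))
      + (15399/250)*(g4*(4/3 - x - q)) + (15632/375)*(g4*(y - z)*z) + (8273/600)*(g4*(y - z)*r)
      + (21029/3000)*(g4*(y - z)*(x - p)) + (27937/1500)*(g4*z*p)
      + (2593/600)*(g4*z*(4/3 - x - r)) + (1223/500)*(g4*r*(4/3 - x - r))
      + (2131/125)*(g4*d*(x - p)) + (1079/60)*(g4*d*(x - t)) + (19817/3000)*(g4*(x - p)*(x - t))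
      + (5783/250)*(g4*(x - p)*(4/3 - x - q)) + (2293/1500)*(g4*(x - t)*(x - t))
      + (14073/1000)*(g1*r) + (12019/750)*(g1*z*z) + (1367/1000)*(g1*z*r)
      + (4921/1500)*(g1*z*(q - 1/2)) + (17153/1500)*(g1*r*d) + (11207/750)*(g1*r*(x - p))
      + (3877/600)*(g1*r*(4/3 - x - p)) + (6501/500)*(g1*r*(x - t))
      + (9037/3000)*(g1*r*(4/3 - x - q)) + (889/375)*(g2*z*(t - y)) + (16583/3000)*(g3*(y - z))
      + (4701/250)*(g3*p) + (18497/1000)*(g3*(y - z)*(y - z)) + (18169/1000)*(g3*(y - z)*(t - y))
      + (2717/1000)*(g3*(y - z)*p) + (1577/3000)*(g3*(y - z)*d) + (9979/1500)*(g3*(y - z)*(x - p))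
      + (2483/1500)*(g3*(y - z)*(x - t)) + (21923/1000)*(g3*(y - z)*(4/3 - x - r))
      + (4963/750)*(g3*(t - y)*(t - y)) + (22181/1000)*(g3*p*d) + (33851/3000)*(g3*p*(x - p))
      + (1736/375)*(g3*p*(4/3 - x - p)) + (11999/750)*(g3*d*(4/3 - x - r))
      + (2431/1000)*((t - y)*(t - y)) + (3557/750)*((t - y)*r) + (1379/1500)*((t - y)*(4/3 - x - p))
      + (4403/3000)*(d*(4/3 - x - q)) + (3311/750)*((y - z)*(y - z)*d)
      + (2087/250)*((y - z)*(y - z)*(4/3 - x - q)) + (2077/300)*((y - z)*(t - y)*d)
      + (33367/3000)*((y - z)*(t - y)*(4/3 - x - q)) + (10879/3000)*((y - z)*d*d)
      + (9991/500)*(z*(t - y)*(q - 1/2)) + (154/125)*((t - y)*(t - y)*d)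
      + (3779/3000)*((t - y)*(t - y)*(x - p)) + (14653/3000)*((t - y)*(t - y)*(4/3 - x - p))
      + (1939/1000)*((t - y)*(t - y)*(x - t)) + (933/1000)*((t - y)*q*(q - 1/2))
      + (517/600)*((t - y)*r*(4/3 - x - p)) + (26267/1500)*((t - y)*d*(4/3 - x - q))
      + (3151/750)*((t - y)*(x - t)*(q - 1/2)) + (5989/200)*(p*r*(4/3 - x - q))
      + (35699/3000)*(d*d*d) + (863/200)*(d*(x - t)*(4/3 - x - q))
      + (24679/3000)*(d*(4/3 - x - q)*(4/3 - x - q))
      + (4829/3000)*((4/3 - x - p)*(q - 1/2)*(4/3 - x - q))
      + (10609/3000)*((y - z)*(y - z)*(y - z)*(y - z)) + (7247/1500)*((y - z)*(y - z)*(y - z)*(t - y))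
      + (703/1500)*((y - z)*(y - z)*(y - z)*r) + (5457/1000)*((y - z)*(y - z)*(y - z)*d)
      + (2491/1000)*((y - z)*(y - z)*(y - z)*(x - t)) + (539/375)*((y - z)*(y - z)*z*(4/3 - x - q))
      + (3184/375)*((y - z)*(y - z)*p*d) + (3427/3000)*((y - z)*(y - z)*r*(4/3 - x - q))
      + (57/20)*((y - z)*(y - z)*r*(4/3 - x - r)) + (2433/1000)*((y - z)*(y - z)*d*d)
      + (9479/3000)*((y - z)*(y - z)*d*(x - t)) + (8099/3000)*((y - z)*(y - z)*d*(4/3 - x - r))
      + (2312/375)*((y - z)*(y - z)*(x - t)*(4/3 - x - q)) + (20833/1500)*((y - z)*z*z*z)
      + (58/25)*((y - z)*z*r*(x - t)) + (778/125)*((y - z)*(t - y)*r*(x - p))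
      + (19811/3000)*((y - z)*(t - y)*r*(x - t)) + (349/75)*((y - z)*(t - y)*d*(x - p))
      + (3271/750)*((y - z)*(t - y)*(x - p)*(x - p)) + (16439/3000)*((y - z)*(t - y)*(x - p)*(x - t))
      + (477/500)*((y - z)*(t - y)*(x - t)*(x - t))
      + (39577/3000)*((y - z)*(t - y)*(x - t)*(4/3 - x - q))
      + (7801/500)*((y - z)*p*p*(4/3 - x - q)) + (35453/3000)*((y - z)*p*r*(4/3 - x - p))
      + (17999/3000)*((y - z)*p*d*d) + (149/15)*((y - z)*r*d*(4/3 - x - q))
      + (3073/750)*((y - z)*r*d*(4/3 - x - r)) + (1397/375)*((y - z)*r*(q - 1/2)*(4/3 - x - r))
      + (7033/3000)*((y - z)*r*(4/3 - x - r)*(4/3 - x - r)) + (1151/600)*((y - z)*d*d*d)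
      + (5197/1000)*((y - z)*d*d*(4/3 - x - r))
      + (147/125)*((y - z)*(q - 1/2)*(4/3 - x - q)*(4/3 - x - q))
      + (1639/1500)*((y - z)*(4/3 - x - q)*(4/3 - x - q)*(4/3 - x - r))
      + (12909/1000)*(z*(t - y)*q*(x - p)) + (859/375)*(z*(t - y)*q*(4/3 - x - p))
      + (219/250)*(z*d*(4/3 - x - q)*(4/3 - x - r)) + (4351/3000)*((t - y)*(t - y)*(t - y)*d)
      + (391/250)*((t - y)*(t - y)*r*d) + (857/250)*((t - y)*(t - y)*r*(x - p))
      + (2479/300)*((t - y)*(t - y)*r*(x - t)) + (1237/1500)*((t - y)*(t - y)*d*(4/3 - x - q))
      + (3823/500)*((t - y)*(t - y)*(x - p)*(x - p)) + (4997/1500)*((t - y)*(t - y)*(x - p)*(x - t))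
      + (2097/1000)*((t - y)*(t - y)*(x - p)*(4/3 - x - q))
      + (1691/300)*((t - y)*(t - y)*(4/3 - x - p)*(x - t)) + (71/120)*((t - y)*p*p*d)
      + (2661/500)*((t - y)*q*q*(4/3 - x - p)) + (1552/375)*((t - y)*q*r*(x - t))
      + (3751/3000)*((t - y)*q*(4/3 - x - p)*(x - t)) + (1951/1500)*((t - y)*d*d*(x - p))
      + (2729/1500)*((t - y)*(x - p)*(x - p)*(4/3 - x - q))
      + (5167/3000)*((t - y)*(x - t)*(x - t)*(4/3 - x - r)) + (17187/1000)*(p*p*r*d)
      + (1279/250)*(p*p*r*(4/3 - x - q)) + (7901/1500)*(p*r*d*(4/3 - x - r))
      + (7211/1500)*(p*r*(x - t)*(4/3 - x - q)) + (563/100)*(p*r*(4/3 - x - q)*(4/3 - x - r))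
      + (13571/1500)*(p*d*(4/3 - x - q)*(4/3 - x - r))
      + (14537/3000)*(p*(4/3 - x - p)*(q - 1/2)*(4/3 - x - q)) + (16109/750)*(r*r*r*(q - 1/2))
      + (4141/750)*(r*r*d*(4/3 - x - q)) + (30727/3000)*(r*r*(q - 1/2)*(q - 1/2))
      + (17177/3000)*(r*d*d*d) + (7621/1500)*(r*d*(x - p)*(4/3 - x - q))
      + (2618/375)*(r*(4/3 - x - q)*(4/3 - x - r)*(4/3 - x - r))
      + (2071/600)*(d*d*d*(4/3 - x - q)) + (559/600)*(d*d*(x - t)*(4/3 - x - q))
      + (1031/300)*(d*d*(q - 1/2)*(q - 1/2)) + (3063/500)*(d*(x - p)*(x - p)*(4/3 - x - q))
      + (7973/1000)*(d*(x - t)*(x - t)*(4/3 - x - q))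
      + (8819/1500)*(d*(x - t)*(4/3 - x - q)*(4/3 - x - r))
      + (4433/1000)*(d*(4/3 - x - q)*(4/3 - x - q)*(4/3 - x - r))
      + (2611/1000)*(d*(4/3 - x - q)*(4/3 - x - r)*(4/3 - x - r))
      + (4627/3000)*((4/3 - x - p)*(q - 1/2)*(4/3 - x - q)*(4/3 - x - r))
      + (628/375)*((4/3 - x - p)*(4/3 - x - q)*(4/3 - x - q)*(4/3 - x - r))
      + (153/40)*((x - t)*(q - 1/2)*(q - 1/2)*(4/3 - x - q))
      + (2744/375)*((q - 1/2)*(4/3 - x - q)*(4/3 - x - q)*(4/3 - x - r))) + ((9931/972000)
      + (1637/162000)*r + (1133/108000)*(r^2) + (83/9000)*(r^3) + (12841/3000)*(r^4)
      + (3293/324000)*q + (499/54000)*(q*r) + (1/100)*(q*r^2) + (11/1000)*(q*r^3)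
      + (259/27000)*(q^2) + (17/1500)*(q^2*r) + (7/750)*(q^2*r^2) + (173/18000)*(q^3)
      + (7/750)*(q^3*r) + (31/3000)*(q^4) + (203/20250)*p + (269/27000)*(p*r) + (13/1500)*(p*r^2)
      + (23933/3000)*(p*r^3) + (49/5400)*(p*q) + (71/6000)*(p*q*r) + (11/1000)*(p*q*r^2)
      + (101/9000)*(p*q^2) + (1/120)*(p*q^2*r) + (29/3000)*(p*q^3) + (67/6750)*(p^2)
      + (9/1000)*(p^2*r) + (17/1500)*(p^2*r^2) + (203/18000)*(p^2*q) + (31/3000)*(p^2*q*r)
      + (9/1000)*(p^2*q^2) + (43/4500)*(p^3) + (4/375)*(p^3*r) + (113/3000)*(p^3*q) + (977/1500)*(p^4)
      + (1021/108000)*t + (281/27000)*(t*r) + (1/100)*(t*r^2) + (107/750)*(t*r^3)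
      + (1199/108000)*(t*q) + (1/120)*(t*q*r) + (31/3000)*(t*q*r^2) + (19/2000)*(t*q^2)
      + (4/375)*(t*q^2*r) + (1/100)*(t*q^3) + (619/54000)*(t*p) + (53/6000)*(t*p*r)
      + (697/3000)*(t*p*r^2) + (133/18000)*(t*p*q) + (7/600)*(t*p*q*r) + (11/1000)*(t*p*q^2)
      + (31/3600)*(t*p^2) + (307/1500)*(t*p^2*r) + (17/1500)*(t*p^2*q) + (31/3000)*(t*p^3)
      + (1/100)*(t^2) + (43/4500)*(t^2*r) + (1/100)*(t^2*r^2) + (4/375)*(t^2*q) + (31/3000)*(t^2*q*r)
      + (29/3000)*(t^2*q^2) + (89/9000)*(t^2*p) + (31/3000)*(t^2*p*r) + (29/3000)*(t^2*p*q)
      + (37/1000)*(t^2*p^2) + (11/1125)*(t^3) + (1/100)*(t^3*r) + (1/100)*(t^3*q) + (47/3000)*(t^3*p)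
      + (41/1500)*(t^4) + (487/54000)*z + (533/54000)*(z*r) + (17/1800)*(z*r^2) + (29/3000)*(z*r^3)
      + (997/108000)*(z*q) + (37/3600)*(z*q*r) + (9/1000)*(z*q*r^2) + (109/9000)*(z*q^2)
      + (4/375)*(z*q^2*r) + (1/100)*(z*q^3) + (29/2700)*(z*p) + (167/18000)*(z*p*r)
      + (887/375)*(z*p*r^2) + (89/9000)*(z*p*q) + (13/1500)*(z*p*q*r) + (1/100)*(z*p*q^2)
      + (167/18000)*(z*p^2) + (29/3000)*(z*p^2*r) + (7/750)*(z*p^2*q) + (29279/3000)*(z*p^3)
      + (29/2400)*(z*t) + (11/1200)*(z*t*r) + (107/375)*(z*t*r^2) + (7/720)*(z*t*q)
      + (4/375)*(z*t*q*r) + (13/1500)*(z*t*q^2) + (131/18000)*(z*t*p) + (17/1500)*(z*t*p*r)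
      + (31/3000)*(z*t*p*q) + (7/600)*(z*t*p^2) + (83/9000)*(z*t^2) + (31/3000)*(z*t^2*r)
      + (31/3000)*(z*t^2*q) + (1/100)*(z*t^2*p) + (4/375)*(z*t^3) + (427/36000)*(z^2)
      + (4/375)*(z^2*r) + (11/1000)*(z^2*r^2) + (91/9000)*(z^2*q) + (13/1500)*(z^2*q*r)
      + (23/3000)*(z^2*q^2) + (179/18000)*(z^2*p) + (11/1000)*(z^2*p*r) + (29/3000)*(z^2*p*q)
      + (717/1000)*(z^2*p^2) + (29/4500)*(z^2*t) + (31/3000)*(z^2*t*r) + (3/250)*(z^2*t*q)
      + (17/1500)*(z^2*t*p) + (17/1500)*(z^2*t^2) + (49/6000)*(z^3) + (1/100)*(z^3*r)
      + (3/250)*(z^3*q) + (29/3000)*(z^3*p) + (17/1500)*(z^3*t) + (29/3000)*(z^4) + (749/81000)*y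
      + (173/18000)*(y*r) + (53/6000)*(y*r^2) + (29/3000)*(y*r^3) + (67/7200)*(y*q)
      + (101/9000)*(y*q*r) + (1/100)*(y*q*r^2) + (3/250)*(y*q^2) + (31/3000)*(y*q^2*r)
      + (1/100)*(y*q^3) + (101/10800)*(y*p) + (19/1800)*(y*p*r) + (2597/3000)*(y*p*r^2)
      + (17/1500)*(y*p*q) + (1/125)*(y*p*q*r) + (29/3000)*(y*p*q^2) + (199/18000)*(y*p^2)
      + (13/1500)*(y*p^2*r) + (1/125)*(y*p^2*q) + (7/750)*(y*p^3) + (79/7200)*(y*t)
      + (37/3600)*(y*t*r) + (1/100)*(y*t*r^2) + (143/18000)*(y*t*q) + (1/100)*(y*t*q*r)
      + (11/1000)*(y*t*q^2) + (163/18000)*(y*t*p) + (4/375)*(y*t*p*r) + (11/1000)*(y*t*p*q)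
      + (29/3000)*(y*t*p^2) + (41/4500)*(y*t^2) + (29/3000)*(y*t^2*r) + (29/3000)*(y*t^2*q)
      + (4/375)*(y*t^2*p) + (31/3000)*(y*t^3) + (4/375)*(y*z) + (19/2000)*(y*z*r)
      + (13/1000)*(y*z*r^2) + (199/18000)*(y*z*q) + (1/100)*(y*z*q*r) + (11/1500)*(y*z*q^2)
      + (1/80)*(y*z*p) + (1/75)*(y*z*p*r) + (11/1000)*(y*z*p*q) + (17/1500)*(y*z*p^2)
      + (77/9000)*(y*z*t) + (31/3000)*(y*z*t*r) + (11/1000)*(y*z*t*q) + (4/375)*(y*z*t*p)
      + (9/1000)*(y*z*t^2) + (49/6000)*(y*z^2) + (13/1500)*(y*z^2*r) + (11/1000)*(y*z^2*q)
      + (3/500)*(y*z^2*p) + (4/375)*(y*z^2*t) + (11/1000)*(y*z^3) + (127/12000)*(y^2)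
      + (173/18000)*(y^2*r) + (17/1500)*(y^2*r^2) + (47/4500)*(y^2*q) + (1/120)*(y^2*q*r)
      + (11/1500)*(y^2*q^2) + (13/1125)*(y^2*p) + (4/375)*(y^2*p*r) + (7/750)*(y^2*p*q)
      + (11/1000)*(y^2*p^2) + (181/18000)*(y^2*t) + (11/1000)*(y^2*t*r) + (17/1500)*(y^2*t*q)
      + (4/375)*(y^2*t*p) + (31/3000)*(y^2*t^2) + (3/400)*(y^2*z) + (9/1000)*(y^2*z*r)
      + (37/3000)*(y^2*z*q) + (1/150)*(y^2*z*p) + (37/3000)*(y^2*z*t) + (17/1500)*(y^2*z^2)
      + (181/18000)*(y^3) + (4/375)*(y^3*r) + (11/1000)*(y^3*q) + (1/125)*(y^3*p) + (7/750)*(y^3*t)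
      + (1/100)*(y^3*z) + (1/100)*(y^4))"
    (is "0 < ?P")
    by (intro add_pos_nonneg add_nonneg_nonneg mult_nonneg_nonneg mult_pos_pos zero_le_power)
      (use atoms widths g_pos certificate_atoms_nonneg
        y_nonneg t_nonneg z_nonneg p_nonneg q_nonneg r_nonneg d_nonneg in simp_all)
  have ident: "?P = (- (29729/1500) + (52877/3000)*r + (6959/3000)*q + (24013/750)*p + (1023/200)*t - (197/25)*z
      + (1097/500)*y - (44/125)*r^2 + (5791/600)*q*r - (227/200)*q^2 - (49/75)*p*r + (12649/1500)*p*q
      - (7943/750)*p^2 - (197/125)*t*r + (4321/3000)*t*q - (113/15)*t*p - (41/1500)*t^2
      + (188/375)*z*r + (33857/3000)*z*q - (5767/600)*z*p + (12007/3000)*z*t + (2624/375)*z^2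
      - (10543/1000)*y*r - (1667/1500)*y*q - (1913/125)*y*p - (143/375)*y*t + (1011/100)*y*z
      + (7669/1000)*y^2)
      * (2*x^2 + y^2 + z^2 - 1 - t^2)"
    unfolding g_defs unfolding x_eq d_eq by algebra
  from pos show False
    unfolding ident by (simp add: t_sq)
qed

lemma refute_r_ge_half:
  assumes "1/2 \<le> r"
  shows False
proof -
  have atoms: "0 \<le> r - 1/2"
    using assms by simp
  have widths: "0 \<le> 4/3 - x - q" "0 \<le> 4/3 - x - r"
    using less_four_thirds_minus_x(2,3) by simp_all
  have pos: "0 < g4 + ((79/150)*(g5*(t - y)) + (153/1000)*(g5*(y - z)*(y - z)) + (5351/1500)*(g5*(y - z)*(t - y))
      + (3/4)*(g5*(y - z)*(4/3 - x - q)) + (221/150)*(g5*(y - z)*(4/3 - x - r))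
      + (5831/1500)*(g5*(t - y)*(t - y)) + (272/125)*(g5*(t - y)*(4/3 - x - p))
      + (3701/3000)*(g5*(t - y)*(4/3 - x - q)) + (3301/1000)*(g5*(t - y)*(4/3 - x - r))
      + (893/300)*(g5*d*(4/3 - x - r)) + (531/500)*(g6*(y - z)*(y - z))
      + (1201/1500)*(g6*(y - z)*(4/3 - x - p)) + (791/1500)*(g6*(y - z)*(r - 1/2))
      + (1679/3000)*(g6*(t - y)*d) + (68/75)*(g6*(t - y)*(x - t))
      + (2117/1000)*(g6*(t - y)*(r - 1/2)) + (758/375)*(g7*(y - z)) + (2497/600)*(g7*(t - y))
      + (7619/3000)*(g7*(x - t)) + (6986/375)*(g7*(r - 1/2)) + (307/250)*(g7*(y - z)*(t - y))
      + (857/1000)*(g7*(y - z)*(4/3 - x - p)) + (149/250)*(g7*(y - z)*(4/3 - x - q))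
      + (89/600)*(g7*(y - z)*(4/3 - x - r)) + (4207/3000)*(g7*(t - y)*(x - p))
      + (481/600)*(g7*(t - y)*(4/3 - x - p)) + (563/300)*(g7*r*d) + (21/25)*(g7*r*(x - p))
      + (10493/3000)*(g7*r*(x - t)) + (667/375)*(g7*d*(4/3 - x - q))
      + (2461/3000)*(g7*(x - p)*(x - t)) + (751/1500)*(g7*(x - t)*(4/3 - x - q))
      + (26681/750)*(g4*d) + (25457/3000)*(g4*(x - t)) + (166903/3000)*(g4*(4/3 - x - r))
      + (4489/1500)*(g4*p*(4/3 - x - q)) + (217/200)*(g4*q*q)
      + (5051/3000)*(g4*q*(4/3 - x - p)) + (1448/375)*(g4*r*(4/3 - x - r))
      + (1127/500)*(g4*d*d) + (7282/375)*(g4*d*(x - t)) + (446/125)*(g4*(x - p)*(x - p))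
      + (201/40)*(g4*(x - p)*(4/3 - x - r)) + (16937/3000)*(g4*(x - t)*(4/3 - x - r))
      + (36731/1500)*(g1*q) + (1307/750)*(g1*(y - z)*(x - t)) + (341/600)*(g1*z*(t - y))
      + (2463/125)*(g1*q*d) + (11869/1500)*(g1*q*(x - t)) + (18937/3000)*(g1*q*(4/3 - x - r))
      + (14203/750)*(g2*p) + (4889/1500)*(g2*(y - z)*(t - y)) + (2497/750)*(g2*p*d)
      + (5117/300)*(g2*p*(x - p)) + (293/125)*(g2*p*(x - t)) + (3007/250)*(g2*p*(4/3 - x - r))
      + (9227/3000)*(g2*d*(4/3 - x - r)) + (3811/1500)*(g3*(y - z)*(t - y))
      + (4003/1500)*(g3*(y - z)*(4/3 - x - p)) + (3541/1000)*(g3*(t - y)*(4/3 - x - p))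
      + (11809/3000)*((y - z)*(y - z)) + (18167/3000)*((y - z)*r) + (5707/500)*((y - z)*(r - 1/2))
      + (7447/3000)*((t - y)*q) + (3013/600)*((t - y)*(r - 1/2)) + (26047/3000)*(d*(4/3 - x - r))
      + (5403/1000)*((y - z)*(y - z)*r) + (19411/3000)*((y - z)*(y - z)*(x - p))
      + (392/375)*((y - z)*(y - z)*(x - t)) + (5501/3000)*((y - z)*(y - z)*(4/3 - x - q))
      + (28697/3000)*((y - z)*(t - y)*r) + (9521/750)*((y - z)*(t - y)*(x - p))
      + (2407/500)*((y - z)*(t - y)*(4/3 - x - p)) + (2032/375)*((y - z)*(x - t)*(4/3 - x - r))
      + (15811/1500)*((t - y)*(t - y)*(x - p)) + (3269/1500)*((t - y)*(t - y)*(4/3 - x - p))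
      + (2851/1000)*((t - y)*(t - y)*(x - t)) + (959/125)*((t - y)*(t - y)*(4/3 - x - r))
      + (4021/750)*((t - y)*r*r) + (20741/3000)*((t - y)*(x - p)*(4/3 - x - r))
      + (38519/1500)*(p*q*(4/3 - x - r)) + (1368/125)*(d*d*d)
      + (643/250)*(d*(x - t)*(4/3 - x - r)) + (19789/3000)*(d*(4/3 - x - r)*(4/3 - x - r))
      + (12109/3000)*((4/3 - x - p)*(r - 1/2)*(4/3 - x - r))
      + (2119/1000)*((r - 1/2)*(r - 1/2)*(4/3 - x - r))
      + (1381/1000)*((y - z)*(y - z)*(y - z)*(r - 1/2))
      + (1087/3000)*((y - z)*(y - z)*(y - z)*(4/3 - x - q))
      + (4431/1000)*((y - z)*(y - z)*p*(4/3 - x - p)) + (54/25)*((y - z)*(y - z)*q*(4/3 - x - q))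
      + (10967/3000)*((y - z)*(y - z)*r*(x - p))
      + (551/750)*((y - z)*(y - z)*(4/3 - x - p)*(4/3 - x - r))
      + (317/750)*((y - z)*(y - z)*(x - t)*(4/3 - x - q))
      + (2879/3000)*((y - z)*(y - z)*(r - 1/2)*(4/3 - x - r))
      + (1613/3000)*((y - z)*(t - y)*q*(4/3 - x - r)) + (7133/750)*((y - z)*(t - y)*r*(x - t))
      + (111/50)*((y - z)*(t - y)*d*(4/3 - x - p)) + (1171/500)*((y - z)*(t - y)*(x - p)*(x - p))
      + (3529/1500)*((y - z)*(t - y)*(4/3 - x - p)*(x - t)) + (952/375)*((y - z)*p*p*(x - p))
      + (1243/1000)*((y - z)*p*d*(4/3 - x - q)) + (7073/3000)*((y - z)*p*(x - p)*(4/3 - x - q))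
      + (122/125)*((y - z)*q*(x - p)*(4/3 - x - q))
      + (3411/1000)*((y - z)*q*(4/3 - x - p)*(x - t))
      + (973/500)*((y - z)*d*(4/3 - x - q)*(4/3 - x - q))
      + (431/600)*((y - z)*(4/3 - x - p)*(4/3 - x - p)*(r - 1/2))
      + (1197/1000)*((y - z)*(4/3 - x - p)*(x - t)*(r - 1/2))
      + (1071/1000)*((y - z)*(4/3 - x - p)*(r - 1/2)*(4/3 - x - q))
      + (15811/3000)*((y - z)*(x - t)*(x - t)*(4/3 - x - r))
      + (331/200)*((y - z)*(x - t)*(r - 1/2)*(r - 1/2)) + (14759/3000)*((t - y)*(t - y)*q*d)
      + (7979/3000)*((t - y)*(t - y)*q*(x - t)) + (307/750)*((t - y)*(t - y)*d*(4/3 - x - r))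
      + (193/200)*((t - y)*(t - y)*(x - p)*(x - p)) + (321/500)*((t - y)*(t - y)*(x - p)*(x - t))
      + (11729/3000)*((t - y)*(t - y)*(4/3 - x - p)*(x - t))
      + (994/375)*((t - y)*(t - y)*(r - 1/2)*(r - 1/2)) + (3937/3000)*((t - y)*p*p*d)
      + (409/1000)*((t - y)*p*p*(x - p)) + (1507/500)*((t - y)*p*d*(4/3 - x - q))
      + (13979/1000)*((t - y)*q*(x - t)*(r - 1/2)) + (6857/3000)*((t - y)*r*(x - p)*(4/3 - x - q))
      + (2749/3000)*((t - y)*d*(4/3 - x - q)*(4/3 - x - q))
      + (7447/1500)*((t - y)*(4/3 - x - p)*(x - t)*(r - 1/2))
      + (583/250)*((t - y)*(4/3 - x - p)*(4/3 - x - q)*(4/3 - x - q))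
      + (91/50)*((t - y)*(x - t)*(x - t)*(4/3 - x - r)) + (27241/3000)*(p*p*p*(r - 1/2))
      + (1307/600)*(p*q*(x - t)*(4/3 - x - r)) + (2051/600)*(p*d*d*d)
      + (1734/125)*(p*d*(4/3 - x - q)*(4/3 - x - r))
      + (2371/1000)*(p*(4/3 - x - p)*(4/3 - x - p)*(4/3 - x - r))
      + (823/120)*(p*(4/3 - x - p)*(r - 1/2)*(4/3 - x - r)) + (6127/600)*(q*q*q*(r - 1/2))
      + (9681/1000)*(q*q*d*(4/3 - x - r)) + (457/600)*(q*d*d*d)
      + (13559/3000)*(q*(4/3 - x - q)*(4/3 - x - q)*(4/3 - x - r))
      + (8101/3000)*(r*(4/3 - x - p)*(r - 1/2)*(4/3 - x - r))
      + (1181/3000)*(d*d*d*(4/3 - x - r)) + (1099/200)*(d*d*(r - 1/2)*(r - 1/2))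
      + (2719/1000)*(d*d*(4/3 - x - q)*(4/3 - x - r))
      + (1661/3000)*(d*(x - p)*(4/3 - x - p)*(4/3 - x - r))
      + (1619/750)*(d*(x - t)*(x - t)*(4/3 - x - r))
      + (11287/3000)*((r - 1/2)*(r - 1/2)*(r - 1/2)*(r - 1/2))
      + (1109/500)*((r - 1/2)*(4/3 - x - q)*(4/3 - x - r)*(4/3 - x - r))
      + (1373/750)*((r - 1/2)*(4/3 - x - r)*(4/3 - x - r)*(4/3 - x - r))) + ((13051/1296000)
      + (121/12960)*r + (1061/108000)*(r^2) + (97/9000)*(r^3) + (29/3000)*(r^4) + (161/16200)*q
      + (553/54000)*(q*r) + (49/4500)*(q*r^2) + (7/750)*(q*r^3) + (1087/108000)*(q^2)
      + (187/18000)*(q^2*r) + (29/3000)*(q^2*r^2) + (11/1125)*(q^3) + (31/3000)*(q^3*r)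
      + (4319/1000)*(q^4) + (83/9000)*p + (199/18000)*(p*r) + (23/2250)*(p*r^2) + (29/3000)*(p*r^3)
      + (38/3375)*(p*q) + (79/9000)*(p*q*r) + (7/750)*(p*q*r^2) + (41/4500)*(p*q^2)
      + (1097/3000)*(p*q^2*r) + (31/3000)*(p*q^3) + (1219/108000)*(p^2) + (73/9000)*(p^2*r)
      + (1/100)*(p^2*r^2) + (157/18000)*(p^2*q) + (31/3000)*(p^2*q*r) + (31/3000)*(p^2*q^2)
      + (169/18000)*(p^3) + (31/3000)*(p^3*r) + (1/100)*(p^3*q) + (2051/600)*(p^4) + (509/54000)*t
      + (647/54000)*(t*r) + (161/18000)*(t*r^2) + (31/3000)*(t*r^3) + (103/10800)*(t*q)
      + (31/3600)*(t*q*r) + (7/600)*(t*q*r^2) + (11629/18000)*(t*q^2) + (29/3000)*(t*q^2*r)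
      + (1/100)*(t*q^3) + (319/27000)*(t*p) + (133/18000)*(t*p*r) + (17/1500)*(t*p*r^2)
      + (77/9000)*(t*p*q) + (19/1500)*(t*p*q*r) + (1/100)*(t*p*q^2) + (73/9000)*(t*p^2)
      + (133/1000)*(t*p^2*r) + (17/1500)*(t*p^2*q) + (4/375)*(t*p^3) + (23/2250)*(t^2)
      + (89/9000)*(t^2*r) + (1/100)*(t^2*r^2) + (37/3600)*(t^2*q) + (1/100)*(t^2*q*r)
      + (29/3000)*(t^2*q^2) + (7/750)*(t^2*p) + (269/3000)*(t^2*p*r) + (461/3000)*(t^2*p*q)
      + (31/3000)*(t^2*p^2) + (23/2250)*(t^3) + (397/1000)*(t^3*r) + (139/120)*(t^3*q)
      + (29/3000)*(t^3*p) + (1/100)*(t^4) + (181/18000)*z + (607/54000)*(z*r) + (59/6000)*(z*r^2)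
      + (29/3000)*(z*r^3) + (307/27000)*(z*q) + (97/18000)*(z*q*r) + (11/1000)*(z*q*r^2)
      + (29/3600)*(z*q^2) + (31/3000)*(z*q^2*r) + (383/750)*(z*q^3) + (167/13500)*(z*p)
      + (137/18000)*(z*p*r) + (11/1000)*(z*p*r^2) + (859/400)*(z*p*q) + (4/375)*(z*p*q*r)
      + (67/125)*(z*p*q^2) + (169/18000)*(z*p^2) + (4/375)*(z*p^2*r) + (29/3000)*(z*p^2*q)
      + (413/1000)*(z*p^3) + (49/4000)*(z*t) + (107/18000)*(z*t*r) + (1/100)*(z*t*r^2)
      + (37/4500)*(z*t*q) + (7/600)*(z*t*q*r) + (4/375)*(z*t*q^2) + (1/150)*(z*t*p)
      + (11/1000)*(z*t*p*r) + (193/300)*(z*t*p*q) + (31/3000)*(z*t*p^2) + (73/9000)*(z*t^2)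
      + (7/600)*(z*t^2*r) + (361/600)*(z*t^2*q) + (31/3000)*(z*t^2*p) + (31/3000)*(z*t^3)
      + (1183/108000)*(z^2) + (17/1500)*(z^2*r) + (7/750)*(z^2*r^2) + (199/18000)*(z^2*q)
      + (4/375)*(z^2*q*r) + (104/375)*(z^2*q^2) + (2263/18000)*(z^2*p) + (59/600)*(z^2*p*r)
      + (31/3000)*(z^2*p*q) + (31/3000)*(z^2*p^2) + (119/18000)*(z^2*t) + (37/3000)*(z^2*t*r)
      + (4/375)*(z^2*t*q) + (2923/3000)*(z^2*t*p) + (2153/3000)*(z^2*t^2) + (151/18000)*(z^3)
      + (13/1500)*(z^3*r) + (1771/1500)*(z^3*q) + (7087/3000)*(z^3*p) + (4/375)*(z^3*t)
      + (1/100)*(z^4) + (191/18000)*y + (113/10800)*(y*r) + (181/18000)*(y*r^2) + (29/3000)*(y*r^3)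
      + (199/18000)*(y*q) + (53/6000)*(y*q*r) + (29/3000)*(y*q*r^2) + (1/125)*(y*q^2)
      + (7/750)*(y*q^2*r) + (1/100)*(y*q^3) + (49/4500)*(y*p) + (181/18000)*(y*p*r)
      + (29/3000)*(y*p*r^2) + (11/1200)*(y*p*q) + (13/1500)*(y*p*q*r) + (1901/750)*(y*p*q^2)
      + (193/18000)*(y*p^2) + (29/3000)*(y*p^2*r) + (9/1000)*(y*p^2*q) + (1469/3000)*(y*p^3)
      + (431/36000)*(y*t) + (107/18000)*(y*t*r) + (4/375)*(y*t*r^2) + (3/400)*(y*t*q)
      + (93/500)*(y*t*q*r) + (17/1500)*(y*t*q^2) + (53/9000)*(y*t*p) + (3/250)*(y*t*p*r)
      + (37/3000)*(y*t*p*q) + (109/600)*(y*t*p^2) + (2/225)*(y*t^2) + (4/375)*(y*t^2*r)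
      + (29/3000)*(y*t^2*q) + (17/1500)*(y*t^2*p) + (1/100)*(y*t^3) + (137/13500)*(y*z)
      + (3/250)*(y*z*r) + (1/100)*(y*z*r^2) + (13/1200)*(y*z*q) + (1/75)*(y*z*q*r)
      + (3901/3000)*(y*z*q^2) + (11/1800)*(y*z*p) + (3/250)*(y*z*p*r) + (931/1500)*(y*z*p*q)
      + (7/600)*(y*z*p^2) + (1/150)*(y*z*t) + (7/600)*(y*z*t*r) + (23/750)*(y*z*t*q)
      + (17/1500)*(y*z*t*p) + (4/375)*(y*z*t^2) + (1/240)*(y*z^2) + (13/1500)*(y*z^2*r)
      + (11/1500)*(y*z^2*q) + (11/1000)*(y*z^2*p) + (47/3000)*(y*z^2*t) + (7/500)*(y*z^3)
      + (197/21600)*(y^2) + (23/2250)*(y^2*r) + (11/1000)*(y^2*r^2) + (43/4500)*(y^2*q)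
      + (3/250)*(y^2*q*r) + (159/1000)*(y^2*q^2) + (173/18000)*(y^2*p) + (4/375)*(y^2*p*r)
      + (17/1500)*(y^2*p*q) + (12563/3000)*(y^2*p^2) + (71/9000)*(y^2*t) + (4/375)*(y^2*t*r)
      + (17/60)*(y^2*t*q) + (7/600)*(y^2*t*p) + (17/1500)*(y^2*t^2) + (3239/18000)*(y^2*z)
      + (23/3000)*(y^2*z*r) + (71/1000)*(y^2*z*q) + (4/375)*(y^2*z*p) + (1/60)*(y^2*z*t)
      + (539/3000)*(y^2*z^2) + (73/9000)*(y^3) + (9/1000)*(y^3*r) + (7/750)*(y^3*q) + (7/750)*(y^3*p)
      + (2267/3000)*(y^3*t) + (53/3000)*(y^3*z) + (19/100)*(y^4))"
    (is "0 < ?P")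
    by (intro add_pos_nonneg add_nonneg_nonneg mult_nonneg_nonneg mult_pos_pos zero_le_power)
      (use atoms widths g_pos certificate_atoms_nonneg
        y_nonneg t_nonneg z_nonneg p_nonneg q_nonneg r_nonneg d_nonneg in simp_all)
  have ident: "?P = (- (27997/1500) - (171/1000)*r + (74807/3000)*q + (9809/375)*p + (6269/1500)*t + (31/375)*z
      + (667/3000)*y + (1099/1500)*r^2 + (2227/1000)*q*r - (9169/1500)*q^2 + (12901/3000)*p*r
      - (4523/1500)*p*q - (1669/250)*p^2 + (1423/1000)*t*r - (9617/1500)*t*q - (3421/750)*t*p
      - (1/100)*t^2 + (1957/750)*z*r + (787/1000)*z*q - (381/100)*z*p + (73/600)*z*t + (1939/375)*z^2
      + (30397/3000)*y*r + (301/1000)*y*q - (2709/1000)*y*p - (61/200)*y*t + (3839/1000)*y*z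
      + (487/3000)*y^2)
      * (2*x^2 + y^2 + z^2 - 1 - t^2)"
    unfolding g_defs unfolding x_eq d_eq by algebra
  from pos show False
    unfolding ident by (simp add: t_sq)
qed

lemma refute_all_lt_half:
  assumes "p < 1/2" "q < 1/2" "r < 1/2"
  shows False
proof -
  have atoms: "0 \<le> 1/2 - p" "0 \<le> 1/2 - q" "0 \<le> 1/2 - r"
    using assms by simp_all
  have pos: "0 < g4 + ((17/1500)*(g5*(t - y)) + (23/1500)*(g5*(y - z)*(t - y)) + (1/60)*(g5*(t - y)*(t - y))
      + (1/200)*(g5*d*d) + (1/120)*(g6*(t - y)) + (31/3000)*(g6*(y - z)*p)
      + (41/3000)*(g6*(y - z)*(4/3 - x - p)) + (37/3000)*(g6*(t - y)*p)
      + (23/1500)*(g6*(t - y)*(4/3 - x - p)) + (29/3000)*(g7*(t - y)) + (19/3000)*(g7*(t - y)*p)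
      + (13/1000)*(g7*(t - y)*(4/3 - x - p)) + (10943/3000)*(g4*p) + (373/1500)*(g4*q)
      + (151/600)*(g4*r) + (191/120)*(g4*(x - p)) + (271/150)*(g4*(4/3 - x - p))
      + (87/500)*(g4*(x - t)) + (77/3000)*(g4*(x - p)*(x - p)) + (89/3000)*(g4*(x - p)*(x - t))
      + (23/1500)*(g4*(4/3 - x - p)*(4/3 - x - p)) + (19/125)*(g1*(1/2 - p))
      + (499/3000)*(g2*(1/2 - q)) + (1/25)*(g2*(x - t)*(1/2 - q)) + (251/1500)*(g3*(1/2 - r))
      + (1/25)*(g3*(x - t)*(1/2 - r)) + (13/250)*(y - z) + (103/750)*(t - y)
      + (691/1000)*((y - z)*(y - z)) + (259/500)*((y - z)*(t - y)) + (7/100)*((y - z)*(1/2 - q))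
      + (1583/3000)*((t - y)*(t - y)) + (49/600)*((t - y)*d) + (109/3000)*(p*(1/2 - p))
      + (11/500)*((y - z)*(y - z)*d) + (173/1500)*((y - z)*(t - y)*(x - p))
      + (773/3000)*((y - z)*(t - y)*(x - t)) + (17/600)*((y - z)*q*d)
      + (43/1000)*((y - z)*q*(x - p)) + (73/3000)*((y - z)*r*(4/3 - x - p))
      + (17/3000)*((y - z)*(x - p)*(1/2 - r)) + (113/3000)*((y - z)*(4/3 - x - p)*(4/3 - x - p))
      + (7/250)*((y - z)*(4/3 - x - p)*(1/2 - q)) + (67/3000)*((y - z)*(x - t)*(1/2 - r))
      + (14/125)*((t - y)*(t - y)*(x - p)) + (29/120)*((t - y)*(t - y)*(x - t))
      + (11/200)*((t - y)*(4/3 - x - p)*(4/3 - x - p)) + (61/750)*(p*p*(1/2 - p))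
      + (91/750)*(p*d*(4/3 - x - p)) + (89/3000)*(q*q*(1/2 - q))
      + (31/1000)*(r*r*(1/2 - r)) + (23/750)*(d*d*(x - p)) + (29/600)*(d*d*(x - t))
      + (193/3000)*(d*(4/3 - x - p)*(4/3 - x - p)) + (91/750)*((x - p)*(1/2 - q)*(1/2 - r))
      + (64/375)*((4/3 - x - p)*(1/2 - q)*(1/2 - r)) + (4537/750)*((1/2 - p)*(1/2 - q)*(1/2 - r))
      + (73/3000)*((y - z)*(t - y)*q*q) + (29/1500)*((y - z)*(t - y)*(1/2 - r)*(1/2 - r))
      + (1/50)*((y - z)*q*q*(x - p)) + (11/600)*((y - z)*r*r*(4/3 - x - p))
      + (1/125)*((y - z)*d*(x - t)*(x - t)) + (1/125)*((t - y)*(t - y)*p*(x - p))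
      + (2/75)*((t - y)*(t - y)*q*q) + (13/600)*((t - y)*(t - y)*r*r)
      + (7/750)*((t - y)*(t - y)*(x - p)*(4/3 - x - p)) + (1/100)*((t - y)*d*d*d)
      + (7/500)*((t - y)*d*(x - t)*(x - t))
      + (59/3000)*((t - y)*(4/3 - x - p)*(4/3 - x - p)*(4/3 - x - p))
      + (29/3000)*((t - y)*(4/3 - x - p)*(4/3 - x - p)*(x - t)) + (7/200)*(p*p*d*d)
      + (37/750)*(p*d*(4/3 - x - p)*(4/3 - x - p)) + (8/375)*(p*(x - p)*(x - p)*(x - p))
      + (17/1500)*(p*(x - t)*(x - t)*(1/2 - p)) + (7/300)*(q*q*(4/3 - x - p)*(1/2 - q))
      + (11/600)*(q*(x - t)*(x - t)*(1/2 - q)) + (1/50)*(r*r*(4/3 - x - p)*(1/2 - r))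
      + (53/3000)*(r*(x - t)*(x - t)*(1/2 - r)) + (23/1500)*(d*d*(x - t)*(x - t))
      + (1/40)*(d*d*(1/2 - q)*(1/2 - r))
      + (61/3000)*(d*(4/3 - x - p)*(4/3 - x - p)*(4/3 - x - p))) + ((3323/324000)
      + (1547/162000)*r + (1/96)*(r^2) + (61/6000)*(r^3) + (1/100)*(r^4) + (1493/162000)*q
      + (569/54000)*(q*r) + (71/6000)*(q*r^2) + (3/200)*(q*r^3) + (77/7200)*(q^2) + (59/6000)*(q^2*r)
      + (1/100)*(q^2*r^2) + (179/18000)*(q^3) + (3/200)*(q^3*r) + (1/100)*(q^4) + (187/20250)*p
      + (583/54000)*(p*r) + (1/100)*(p*r^2) + (1/50)*(p*r^3) + (583/54000)*(p*q) + (1253/180)*(p*q*r)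
      + (7/100)*(p*q*r^2) + (29/3000)*(p*q^2) + (7/100)*(p*q^2*r) + (1/60)*(p*q^3)
      + (1189/108000)*(p^2) + (89/9000)*(p^2*r) + (1/100)*(p^2*r^2) + (89/9000)*(p^2*q)
      + (9/250)*(p^2*q*r) + (1/100)*(p^2*q^2) + (161/18000)*(p^3) + (1/100)*(p^3*r) + (1/100)*(p^3*q)
      + (31/3000)*(p^4) + (1589/162000)*t + (193/18000)*(t*r) + (83/9000)*(t*r^2) + (1/100)*(t*r^3)
      + (21/2000)*(t*q) + (17/1800)*(t*q*r) + (7/100)*(t*q*r^2) + (43/4500)*(t*q^2)
      + (7/100)*(t*q^2*r) + (1/100)*(t*q^3) + (23/2250)*(t*p) + (479/18000)*(t*p*r)
      + (53/750)*(t*p*r^2) + (743/18000)*(t*p*q) + (51/1000)*(t*p*q*r) + (179/3000)*(t*p*q^2)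
      + (169/18000)*(t*p^2) + (21/1000)*(t*p^2*r) + (21/1000)*(t*p^2*q) + (31/3000)*(t*p^3)
      + (269/27000)*(t^2) + (23/2000)*(t^2*r) + (1/75)*(t^2*r^2) + (61/6000)*(t^2*q)
      + (19/500)*(t^2*q*r) + (1/100)*(t^2*q^2) + (1/100)*(t^2*p) + (33/1000)*(t^2*p*r)
      + (17/500)*(t^2*p*q) + (1/100)*(t^2*p^2) + (31/3000)*(t^3) + (17/1500)*(t^3*r) + (1/100)*(t^3*q)
      + (1/50)*(t^3*p) + (1/100)*(t^4) + (109/10800)*z + (181/18000)*(z*r) + (13/1500)*(z*r^2)
      + (1/50)*(z*r^3) + (199/18000)*(z*q) + (3/250)*(z*q*r) + (1/25)*(z*q*r^2) + (2/225)*(z*q^2)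
      + (1/25)*(z*q^2*r) + (7/300)*(z*q^3) + (61/6000)*(z*p) + (313/18000)*(z*p*r)
      + (17/600)*(z*p*r^2) + (181/18000)*(z*p*q) + (191/3000)*(z*p*q*r) + (1/60)*(z*p*q^2)
      + (179/18000)*(z*p^2) + (13/500)*(z*p^2*r) + (13/500)*(z*p^2*q) + (33/1000)*(z*p^3)
      + (571/54000)*(z*t) + (11/1200)*(z*t*r) + (11/1000)*(z*t*r^2) + (19/2000)*(z*t*q)
      + (61/3000)*(z*t*q*r) + (31/3000)*(z*t*q^2) + (163/18000)*(z*t*p) + (61/3000)*(z*t*p*r)
      + (61/3000)*(z*t*p*q) + (11/750)*(z*t*p^2) + (31/3000)*(z*t^2) + (17/600)*(z*t^2*r)
      + (31/1500)*(z*t^2*q) + (19/1000)*(z*t^2*p) + (1/100)*(z*t^3) + (32/3375)*(z^2)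
      + (13/1200)*(z^2*r) + (31/3000)*(z^2*r^2) + (11/1200)*(z^2*q) + (7/750)*(z^2*q*r)
      + (4/375)*(z^2*q^2) + (193/9000)*(z^2*p) + (19/1500)*(z^2*p*r) + (29/3000)*(z^2*p*q)
      + (1/100)*(z^2*p^2) + (19/1125)*(z^2*t) + (23/500)*(z^2*t*r) + (1/100)*(z^2*t*q)
      + (17/1500)*(z^2*t*p) + (13/500)*(z^2*t^2) + (13/1125)*(z^3) + (41/1500)*(z^3*r)
      + (31/3000)*(z^3*q) + (37/1000)*(z^3*p) + (23/500)*(z^3*t) + (127/600)*(z^4) + (323/32400)*y
      + (59/6000)*(y*r) + (41/4500)*(y*r^2) + (1/100)*(y*r^3) + (193/18000)*(y*q) + (1/100)*(y*q*r)
      + (1/100)*(y*q*r^2) + (83/9000)*(y*q^2) + (1/100)*(y*q^2*r) + (1/75)*(y*q^3) + (169/18000)*(y*p)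
      + (193/18000)*(y*p*r) + (21/1000)*(y*p*r^2) + (41/3600)*(y*p*q) + (47/3000)*(y*p*q*r)
      + (131/3000)*(y*p*q^2) + (209/18000)*(y*p^2) + (1/125)*(y*p^2*r) + (1/125)*(y*p^2*q)
      + (7/750)*(y*p^3) + (187/18000)*(y*t) + (59/6000)*(y*t*r) + (31/3000)*(y*t*r^2)
      + (97/6000)*(y*t*q) + (29/3000)*(y*t*q*r) + (29/3000)*(y*t*q^2) + (167/18000)*(y*t*p)
      + (29/3000)*(y*t*p*r) + (29/3000)*(y*t*p*q) + (31/3000)*(y*t*p^2) + (89/9000)*(y*t^2)
      + (7/300)*(y*t^2*r) + (23/750)*(y*t^2*q) + (11/1000)*(y*t^2*p) + (1/100)*(y*t^3)
      + (517/54000)*(y*z) + (29/750)*(y*z*r) + (31/1000)*(y*z*r^2) + (9/1000)*(y*z*q)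
      + (2/25)*(y*z*q*r) + (91/3000)*(y*z*q^2) + (101/9000)*(y*z*p) + (23/300)*(y*z*p*r)
      + (109/1500)*(y*z*p*q) + (167/3000)*(y*z*p^2) + (4/375)*(y*z*t) + (4/375)*(y*z*t*r)
      + (2/125)*(y*z*t*q) + (29/1000)*(y*z*t*p) + (29/3000)*(y*z*t^2) + (41/3000)*(y*z^2)
      + (1/24)*(y*z^2*r) + (31/3000)*(y*z^2*q) + (9/200)*(y*z^2*p) + (19/375)*(y*z^2*t)
      + (1397/1500)*(y*z^3) + (263/27000)*(y^2) + (53/6000)*(y^2*r) + (11/1000)*(y^2*r^2)
      + (39/2000)*(y^2*q) + (4/375)*(y^2*q*r) + (13/1000)*(y^2*q^2) + (7/600)*(y^2*p)
      + (7/500)*(y^2*p*r) + (11/1000)*(y^2*p*q) + (41/750)*(y^2*p^2) + (29/3000)*(y^2*t)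
      + (1/100)*(y^2*t*r) + (27/500)*(y^2*t*q) + (17/600)*(y^2*t*p) + (31/1000)*(y^2*t^2)
      + (347/9000)*(y^2*z) + (4/375)*(y^2*z*r) + (133/3000)*(y^2*z*q) + (7/500)*(y^2*z*p)
      + (11/750)*(y^2*z*t) + (3943/3000)*(y^2*z^2) + (91/9000)*(y^3) + (31/3000)*(y^3*r)
      + (17/600)*(y^3*q) + (7/600)*(y^3*p) + (1/100)*(y^3*t) + (917/1000)*(y^3*z) + (563/3000)*(y^4))"
    (is "0 < ?P")
    by (intro add_pos_nonneg add_nonneg_nonneg mult_nonneg_nonneg mult_pos_pos zero_le_power)
      (use atoms g_pos certificate_atoms_nonneg
        y_nonneg t_nonneg z_nonneg p_nonneg q_nonneg r_nonneg d_nonneg in simp_all)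
  have ident: "?P = (- (399/500) - (253/3000)*r - (1/12)*q - (11/200)*p + (163/750)*t + (379/3000)*z + (159/1000)*y
      + (1/1500)*r^2 - (1/500)*q*r - (1/3000)*q^2 + (3/1000)*p*r + (1/500)*p*q - (67/3000)*p^2
      + (1/375)*t*r + (1/250)*t*q - (3/500)*t*p - (1/100)*t^2 - (1/120)*z*r - (1/1500)*z*q
      - (67/3000)*z*p - (1/100)*z*t + (223/3000)*z^2 - (1/750)*y*r - (13/1500)*y*q - (27/1000)*y*p
      - (1/100)*y*t + (121/600)*y*z + (3/50)*y^2)
      * (2*x^2 + y^2 + z^2 - 1 - t^2)"
    unfolding g_defs unfolding x_eq d_eq by algebra
  from pos show False
    unfolding ident by (simp add: t_sq)
qed

lemma inconsistent: False
proof (cases "p < 1/2 \<and> q < 1/2 \<and> r < 1/2")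
  case True
  then show False by (blast intro: refute_all_lt_half)
next
  case False
  then show False
    using refute_p_ge_half refute_q_ge_half refute_r_ge_half by force
qed

end

lemma sqrt_alpha_sum_bounds:
  fixes x y z :: real
  assumes "x + y + z = 1" "0 \<le> x" "0 \<le> z" "z \<le> y" "1 \<le> 2*x^2 + z^2"
  defines "t \<equiv> sqrt (2*x^2 + y^2 + z^2 - 1)"
  shows "t^2 = 2*x^2 + y^2 + z^2 - 1" "y \<le> t" "t \<le> x"
proof -
  have y_le: "y^2 \<le> 2*x^2 + y^2 + z^2 - 1"
    using assms(5) by linarith
  then have "0 \<le> 2*x^2 + y^2 + z^2 - 1"
    using zero_le_power2[of y] by linarith
  then show "t^2 = 2*x^2 + y^2 + z^2 - 1"
    unfolding t_def by simp
  show "y \<le> t"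
    unfolding t_def using y_le by (rule real_le_rsqrt)
  have "2*x^2 + y^2 + z^2 - 1 = x^2 - 2*(x*y + x*z + y*z)"
    using assms(1) by algebra
  also have "\<dots> \<le> x^2"
  proof -
    have "0 \<le> y"
      using assms(3,4) by linarith
    with assms(2,3) have "0 \<le> x*y + x*z + y*z"
      by (intro add_nonneg_nonneg mult_nonneg_nonneg)
    then show ?thesis
      by simp
  qed
  finally show "t \<le> x"
    unfolding t_def using assms(2) by (rule real_le_lsqrt[rotated])
qed

lemma sum_gt_one_of_constraints:
  fixes x y z p q r d :: real
  assumes xyz: "x + y + z = 1" "0 \<le> x" "0 \<le> z" "z \<le> y" "1 \<le> 2*x^2 + z^2"
    and nonneg: "0 \<le> p" "0 \<le> q" "0 \<le> r" "0 \<le> d"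
    and "2*x^2 + y^2 + z^2 - 1 < p*(p+d)" "y^2 < q*(q+d)" "z^2 < r*(r+d)"
    and "x^2 + y^2 + z^2 < p*(p+d) + q*(q+d) + r*(r+d)"
    and "x^2 + 2*y^2 + 2*z^2 < p^2 + 2*q^2 + 2*r^2 + 2*q*d + 2*r*d"
    and "3*x^2 + 2*y^2 + 3*z^2 - 1 < 2*p^2 + q^2 + 2*r^2 + 2*p*d + 2*r*d"
    and "3*x^2 + 3*y^2 + 2*z^2 - 1 < 2*p^2 + 2*q^2 + r^2 + 2*p*d + 2*q*d"
  shows "1 < p + q + r + d"
proof (rule ccontr)
  assume "\<not> 1 < p + q + r + d"
  define D where "D = 1 - p - q - r"
  have D: "d \<le> D" "0 \<le> D" "p + q + r + D = 1"
    using \<open>\<not> 1 < p + q + r + d\<close> nonneg(4) unfolding D_def by linarith+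
  have mono: "p*(p+d) \<le> p*(p+D)" "q*(q+d) \<le> q*(q+D)" "r*(r+d) \<le> r*(r+D)"
      "2*p*d \<le> 2*p*D" "2*q*d \<le> 2*q*D" "2*r*d \<le> 2*r*D"
    using D(1) nonneg by (simp_all add: mult_left_mono)
  define t where "t = sqrt (2*x^2 + y^2 + z^2 - 1)"
  note t = sqrt_alpha_sum_bounds[OF xyz, folded t_def]
  have "t^2 < p*(p+D)" "y^2 < q*(q+D)" "z^2 < r*(r+D)"
    "x^2 + y^2 + z^2 < p*(p+D) + q*(q+D) + r*(r+D)"
    "x^2 + 2*y^2 + 2*z^2 < p^2 + 2*q^2 + 2*r^2 + 2*q*D + 2*r*D"
    "3*x^2 + 2*y^2 + 3*z^2 - 1 < 2*p^2 + q^2 + 2*r^2 + 2*p*D + 2*r*D"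
    "3*x^2 + 3*y^2 + 2*z^2 - 1 < 2*p^2 + 2*q^2 + r^2 + 2*p*D + 2*q*D"
    using assms(10-16) mono t(1) by linarith+
  then have "reduced_config x y z t p q r D"
    using xyz nonneg D t by unfold_locales
  then show False
    by (rule reduced_config.inconsistent)
qed

theorem mainTheorem7:
  fixes a1 a2 x y z a12 a13 a23 d :: real
  assumes "good_pair a1 a2"
    and "canonical_rep a1 a2 x y z"
    and "0 \<le> a12" "0 \<le> a13" "0 \<le> a23" "0 \<le> d"
    and "a12 * (a12 + d) > a1 + a2 - 1"
    and "a13 * (a13 + d) > a1 + (1 - x^2) - 1"
    and "a23 * (a23 + d) > a2 + (1 - x^2) - 1"
    and "a12 * (a12 + d) + a13 * (a13 + d) + a23 * (a23 + d) > a1 + a2 + (1 - x^2) - 1"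
    and "a12^2 + 2*a13^2 + 2*a23^2 + 2*a13*d + 2*a23*d > 2*a1 + 2*a2 + 3*(1 - x^2) - 3"
    and "2*a12^2 + a13^2 + 2*a23^2 + 2*a12*d + 2*a23*d > 2*a1 + 3*a2 + 2*(1 - x^2) - 3"
    and "2*a12^2 + 2*a13^2 + a23^2 + 2*a12*d + 2*a13*d > 3*a1 + 2*a2 + 2*(1 - x^2) - 3"
  shows "a12 + a13 + a23 + d > 1"
proof -
  have rep: "x + y + z = 1" "0 \<le> x" "0 \<le> y" "0 \<le> z"
    and a1: "a1 = x^2 + y^2" and a2: "a2 = x^2 + z^2"
    using assms(2) unfolding canonical_rep_def by auto
  have "a2 \<le> a1" and "\<forall>x y z. canonical_rep a1 a2 x y z \<longrightarrow> 1 \<le> 2*x^2 + z^2"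
    using assms(1) unfolding good_pair_def by (simp_all only: max.bounded_iff) blast+
  with assms(2) have zy: "z^2 \<le> y^2" and dom: "1 \<le> 2*x^2 + z^2"
    unfolding a1 a2 by auto
  from zy rep(3) have "z \<le> y"
    by (rule power2_le_imp_le)
  moreover have
    "2*x^2 + y^2 + z^2 - 1 < a12*(a12+d)" "y^2 < a13*(a13+d)" "z^2 < a23*(a23+d)"
    "x^2 + y^2 + z^2 < a12*(a12+d) + a13*(a13+d) + a23*(a23+d)"
    "x^2 + 2*y^2 + 2*z^2 < a12^2 + 2*a13^2 + 2*a23^2 + 2*a13*d + 2*a23*d"
    "3*x^2 + 2*y^2 + 3*z^2 - 1 < 2*a12^2 + a13^2 + 2*a23^2 + 2*a12*d + 2*a23*d"
    "3*x^2 + 3*y^2 + 2*z^2 - 1 < 2*a12^2 + 2*a13^2 + a23^2 + 2*a12*d + 2*a13*d"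
    using assms(7-13) unfolding a1 a2 by (simp_all add: algebra_simps)
  ultimately show ?thesis
    using sum_gt_one_of_constraints rep(1,2,4) dom assms(3-6) by blast
qed

end
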